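(* Let $A\in\{0,1\}^{m\times m}$, $B\in\{0,1\}^{n\times n}$ be non-degenerate, $\varphi:X_A\to X_B$ an elementary conjugacy and $R_\varphi$ as defined below. For $a\in\{1,\dots,m\}$, $b\in\{1,\dots,n\}$ the following are equivalent: (i) $(R_\varphi)_{a,b}=1$; (ii) there is $a'$ with $\varphi_{\mathrm{loc}}(a,a')=b$; (iii) there is $b'$ with $\varphi^{-1}_{\mathrm{loc}}(b',b)=a$; (iv) there are $x\in X_A$, $y\in X_B$ with $x_0=a$, $y_0=b$ and $y=\varphi(x)$.
   Context: Non-degenerate: no zero rows or columns. $X_A=\{x\in\{1,\dots,m\}^{\mathbb Z}:A_{x_\ell,x_{\ell+1}}=1\ \forall\ell\}$ with the left shift; a conjugacy is a shift-commuting homeomorphism. $\varphi:X_A\to X_B$ is elementary if there are $\varphi_{\mathrm{loc}}$ (on pairs $(a,a')$ with $A_{a,a'}=1$) and $\varphi^{-1}_{\mathrm{loc}}$ (on pairs $(b,b')$ with $B_{b,b'}=1$) with $\varphi(x)_i=\varphi_{\mathrm{loc}}(x_i,x_{i+1})$ and $\varphi^{-1}(y)_i=\varphi^{-1}_{\mathrm{loc}}(y_{i-1},y_i)$ for all $x,y,i$. $R_\varphi\in\{0,1\}^{m\times n}$ is defined by $(R_\varphi)_{a,b}=1$ iff there is $a'$ with $A_{a,a'}=1$ and $\varphi_{\mathrm{loc}}(a,a')=b$. Existential quantifiers over pairs range over allowed pairs. *)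

theory Defs
  imports "HOL-Analysis.Analysis"
begin

text \<open>Square 0-1 matrices of size m are functions nat => nat => nat; only the
entries with indices in {1..m} are relevant.  Points of the shift space are
functions int => nat (bi-infinite sequences), carrying the product topology
of the discrete space nat.\<close>

definition zero_one_matrix :: "nat \<Rightarrow> (nat \<Rightarrow> nat \<Rightarrow> nat) \<Rightarrow> bool" where
  "zero_one_matrix m A \<longleftrightarrow> (\<forall>i\<in>{1..m}. \<forall>j\<in>{1..m}. A i j \<in> {0, 1})"

definition nondegenerate :: "nat \<Rightarrow> (nat \<Rightarrow> nat \<Rightarrow> nat) \<Rightarrow> bool" where
  "nondegenerate m A \<longleftrightarrow>
     (\<forall>i\<in>{1..m}. \<exists>j\<in>{1..m}. A i j = 1) \<and> (\<forall>j\<in>{1..m}. \<exists>i\<in>{1..m}. A i j = 1)"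

definition allowed :: "nat \<Rightarrow> (nat \<Rightarrow> nat \<Rightarrow> nat) \<Rightarrow> nat \<Rightarrow> nat \<Rightarrow> bool" where
  "allowed m A a a' \<longleftrightarrow> a \<in> {1..m} \<and> a' \<in> {1..m} \<and> A a a' = 1"

definition shift_space :: "nat \<Rightarrow> (nat \<Rightarrow> nat \<Rightarrow> nat) \<Rightarrow> (int \<Rightarrow> nat) set" where
  "shift_space m A = {x. \<forall>l. allowed m A (x l) (x (l + 1))}"

definition shift :: "(int \<Rightarrow> nat) \<Rightarrow> (int \<Rightarrow> nat)" where
  "shift x = (\<lambda>i. x (i + 1))"

definition conjugacy ::
  "nat \<Rightarrow> (nat \<Rightarrow> nat \<Rightarrow> nat) \<Rightarrow> nat \<Rightarrow> (nat \<Rightarrow> nat \<Rightarrow> nat) \<Rightarrow> ((int \<Rightarrow> nat) \<Rightarrow> (int \<Rightarrow> nat)) \<Rightarrow> bool" where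
  "conjugacy m A n B \<phi> \<longleftrightarrow>
     (\<exists>\<psi>. homeomorphism (shift_space m A) (shift_space n B) \<phi> \<psi>) \<and>
     (\<forall>x\<in>shift_space m A. \<phi> (shift x) = shift (\<phi> x))"

definition elementary_conjugacy ::
  "nat \<Rightarrow> (nat \<Rightarrow> nat \<Rightarrow> nat) \<Rightarrow> nat \<Rightarrow> (nat \<Rightarrow> nat \<Rightarrow> nat) \<Rightarrow> ((int \<Rightarrow> nat) \<Rightarrow> (int \<Rightarrow> nat))
    \<Rightarrow> (nat \<Rightarrow> nat \<Rightarrow> nat) \<Rightarrow> (nat \<Rightarrow> nat \<Rightarrow> nat) \<Rightarrow> bool" where
  "elementary_conjugacy m A n B \<phi> \<phi>loc \<phi>invloc \<longleftrightarrow>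
     conjugacy m A n B \<phi> \<and>
     (\<forall>x\<in>shift_space m A. \<forall>i. \<phi> x i = \<phi>loc (x i) (x (i + 1))) \<and>
     (\<forall>y\<in>shift_space n B. \<forall>i. inv_into (shift_space m A) \<phi> y i = \<phi>invloc (y (i - 1)) (y i))"

definition R_matrix :: "nat \<Rightarrow> (nat \<Rightarrow> nat \<Rightarrow> nat) \<Rightarrow> (nat \<Rightarrow> nat \<Rightarrow> nat) \<Rightarrow> nat \<Rightarrow> nat \<Rightarrow> nat" where
  "R_matrix m A \<phi>loc a b = (if \<exists>a'. allowed m A a a' \<and> \<phi>loc a a' = b then 1 else 0)"

end

theory Submission
  imports Defs
begin

text \<open>Nondegeneracy lets every allowed pair be continued forever in both directions, so each
allowed pair \<open>(a, a')\<close> of \<open>X\<^sub>A\<close> occurs at positions 0, 1 of a point \<open>x\<close>; thus \<open>\<phi>loc a a' = b\<close>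
for some \<open>a'\<close> exactly when some \<open>x\<close> with \<open>x 0 = a\<close> has \<open>\<phi> x 0 = b\<close>. Dually, an allowed pair
\<open>(b', b)\<close> of \<open>X\<^sub>B\<close> occurs at positions -1, 0 of a point \<open>y\<close>, which is \<open>\<phi> x\<close> for some \<open>x\<close> since \<open>\<phi>\<close>
is onto, and then \<open>x 0 = \<phi>invloc b' b\<close> because \<open>\<phi>\<close> is injective.\<close>

lemma nondegenerate_successor:
  assumes "nondegenerate m A" and "a \<in> {1..m}"
  shows "\<exists>a'. allowed m A a a'"
  using assms by (fastforce simp: nondegenerate_def allowed_def)

lemma nondegenerate_predecessor:
  assumes "nondegenerate m A" and "a' \<in> {1..m}"
  shows "\<exists>a. allowed m A a a'"
  using assms by (fastforce simp: nondegenerate_def allowed_def)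

lemma shift_space_allowed:
  assumes "x \<in> shift_space m A"
  shows "allowed m A (x l) (x (l + 1))"
  using assms by (simp add: shift_space_def)

lemma shift_in_shift_space:
  assumes "x \<in> shift_space m A"
  shows "shift x \<in> shift_space m A"
proof -
  have "allowed m A (x (l + 1)) (x ((l + 1) + 1))" for l
    using assms by (rule shift_space_allowed)
  then show ?thesis by (simp add: shift_space_def shift_def)
qed

lemma allowed_pair_extends_to_point:
  assumes nd: "nondegenerate m A" and al: "allowed m A a a'"
  shows "\<exists>x\<in>shift_space m A. x 0 = a \<and> x 1 = a'"
proof -
  obtain succ where succ: "\<And>i. i \<in> {1..m} \<Longrightarrow> allowed m A i (succ i)"
    using nondegenerate_successor[OF nd] by metis
  obtain pred where pred: "\<And>j. j \<in> {1..m} \<Longrightarrow> allowed m A (pred j) j"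
    using nondegenerate_predecessor[OF nd] by metis
  have succ_iter: "(succ ^^ k) a' \<in> {1..m}" for k
    by (induction k) (use al succ in \<open>auto simp: allowed_def\<close>)
  have pred_iter: "(pred ^^ k) a \<in> {1..m}" for k
    by (induction k) (use al pred in \<open>auto simp: allowed_def\<close>)
  define x where "x l = (if l \<ge> 1 then (succ ^^ nat (l - 1)) a' else (pred ^^ nat (- l)) a)"
    for l :: int
  have "allowed m A (x l) (x (l + 1))" for l
  proof -
    consider "l \<ge> 1" | "l = 0" | "l < 0" by linarith
    then show ?thesis
    proof cases
      case 1
      then have "nat (l + 1 - 1) = Suc (nat (l - 1))" by simp
      with 1 show ?thesis using succ[OF succ_iter[of "nat (l - 1)"]] by (simp add: x_def)
    next
      case 2
      with al show ?thesis by (simp add: x_def)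
    next
      case 3
      then have "nat (- l) = Suc (nat (- (l + 1)))" by simp
      with 3 show ?thesis using pred[OF pred_iter[of "nat (- (l + 1))"]] by (simp add: x_def)
    qed
  qed
  then have "x \<in> shift_space m A" by (simp add: shift_space_def)
  moreover have "x 0 = a" "x 1 = a'" by (simp_all add: x_def)
  ultimately show ?thesis by blast
qed

lemma allowed_pair_extends_to_point_left:
  assumes "nondegenerate m A" and "allowed m A a' a"
  shows "\<exists>x\<in>shift_space m A. x (- 1) = a' \<and> x 0 = a"
proof -
  obtain z where z: "z \<in> shift_space m A" "z 0 = a'" "z 1 = a"
    using allowed_pair_extends_to_point[OF assms] by blast
  have "shift z \<in> shift_space m A"
    using z(1) by (rule shift_in_shift_space)
  moreover have "shift z (- 1) = a'" "shift z 0 = a"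
    using z by (simp_all add: shift_def)
  ultimately show ?thesis by blast
qed

lemma conjugacy_image:
  assumes "conjugacy m A n B \<phi>"
  shows "\<phi> ` shift_space m A = shift_space n B"
  using assms by (auto simp: conjugacy_def homeomorphism_def)

lemma conjugacy_inj_on:
  assumes "conjugacy m A n B \<phi>"
  shows "inj_on \<phi> (shift_space m A)"
  using assms by (metis conjugacy_def homeomorphism_apply1 inj_on_inverseI)

context
  fixes m n :: nat and A B :: "nat \<Rightarrow> nat \<Rightarrow> nat"
    and \<phi> :: "(int \<Rightarrow> nat) \<Rightarrow> (int \<Rightarrow> nat)" and \<phi>loc \<phi>invloc :: "nat \<Rightarrow> nat \<Rightarrow> nat"
  assumes elem: "elementary_conjugacy m A n B \<phi> \<phi>loc \<phi>invloc"
begin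

lemma elementary_conjugacy_conjugacy: "conjugacy m A n B \<phi>"
  using elem by (simp add: elementary_conjugacy_def)

lemma elementary_conjugacy_maps_into:
  "x \<in> shift_space m A \<Longrightarrow> \<phi> x \<in> shift_space n B"
  using conjugacy_image[OF elementary_conjugacy_conjugacy] by blast

lemma elementary_conjugacy_local_rule:
  "x \<in> shift_space m A \<Longrightarrow> \<phi> x i = \<phi>loc (x i) (x (i + 1))"
  using elem by (simp add: elementary_conjugacy_def)

lemma elementary_conjugacy_inverse_local_rule:
  assumes "x \<in> shift_space m A"
  shows "x i = \<phi>invloc (\<phi> x (i - 1)) (\<phi> x i)"
proof -
  have "\<phi> x \<in> shift_space n B"
    using assms by (rule elementary_conjugacy_maps_into)
  then have "inv_into (shift_space m A) \<phi> (\<phi> x) i = \<phi>invloc (\<phi> x (i - 1)) (\<phi> x i)"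
    using elem by (simp add: elementary_conjugacy_def)
  then show ?thesis
    using inv_into_f_f[OF conjugacy_inj_on[OF elementary_conjugacy_conjugacy] assms] by simp
qed

lemma local_rule_iff_point:
  assumes "nondegenerate m A"
  shows "(\<exists>a'. allowed m A a a' \<and> \<phi>loc a a' = b) \<longleftrightarrow>
         (\<exists>x\<in>shift_space m A. x 0 = a \<and> \<phi> x 0 = b)"
proof
  assume "\<exists>a'. allowed m A a a' \<and> \<phi>loc a a' = b"
  then obtain a' where "allowed m A a a'" "\<phi>loc a a' = b" by blast
  then show "\<exists>x\<in>shift_space m A. x 0 = a \<and> \<phi> x 0 = b"
    using allowed_pair_extends_to_point[OF assms] elementary_conjugacy_local_rule by fastforce
next
  assume "\<exists>x\<in>shift_space m A. x 0 = a \<and> \<phi> x 0 = b"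
  then obtain x where "x \<in> shift_space m A" "x 0 = a" "\<phi> x 0 = b" by blast
  then show "\<exists>a'. allowed m A a a' \<and> \<phi>loc a a' = b"
    using shift_space_allowed[of x m A 0] elementary_conjugacy_local_rule[of x 0] by auto
qed

lemma inverse_local_rule_iff_point:
  assumes "nondegenerate n B"
  shows "(\<exists>b'. allowed n B b' b \<and> \<phi>invloc b' b = a) \<longleftrightarrow>
         (\<exists>x\<in>shift_space m A. x 0 = a \<and> \<phi> x 0 = b)"
proof
  assume "\<exists>b'. allowed n B b' b \<and> \<phi>invloc b' b = a"
  then obtain b' where b': "allowed n B b' b" "\<phi>invloc b' b = a" by blast
  obtain y where y: "y \<in> shift_space n B" "y (- 1) = b'" "y 0 = b"
    using allowed_pair_extends_to_point_left[OF assms b'(1)] by blast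
  obtain x where x: "x \<in> shift_space m A" "y = \<phi> x"
    using y(1) conjugacy_image[OF elementary_conjugacy_conjugacy] by blast
  then have "x 0 = a"
    using elementary_conjugacy_inverse_local_rule[of x 0] y b'(2) by simp
  with x y show "\<exists>x\<in>shift_space m A. x 0 = a \<and> \<phi> x 0 = b" by blast
next
  assume "\<exists>x\<in>shift_space m A. x 0 = a \<and> \<phi> x 0 = b"
  then obtain x where x: "x \<in> shift_space m A" "x 0 = a" "\<phi> x 0 = b" by blast
  have "allowed n B (\<phi> x (- 1)) b"
    using shift_space_allowed[OF elementary_conjugacy_maps_into[OF x(1)], of "- 1"] x(3) by simp
  moreover have "\<phi>invloc (\<phi> x (- 1)) b = a"
    using elementary_conjugacy_inverse_local_rule[OF x(1), of 0] x by simp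
  ultimately show "\<exists>b'. allowed n B b' b \<and> \<phi>invloc b' b = a" by blast
qed

end

theorem mainTheorem10:
  fixes m n :: nat and A B :: "nat \<Rightarrow> nat \<Rightarrow> nat"
    and \<phi> :: "(int \<Rightarrow> nat) \<Rightarrow> (int \<Rightarrow> nat)" and \<phi>loc \<phi>invloc :: "nat \<Rightarrow> nat \<Rightarrow> nat"
    and a b :: nat
  assumes "zero_one_matrix m A" and "zero_one_matrix n B"
    and "nondegenerate m A" and "nondegenerate n B"
    and "elementary_conjugacy m A n B \<phi> \<phi>loc \<phi>invloc"
    and "a \<in> {1..m}" and "b \<in> {1..n}"
  shows "(R_matrix m A \<phi>loc a b = 1 \<longleftrightarrow> (\<exists>a'. allowed m A a a' \<and> \<phi>loc a a' = b))
       \<and> ((\<exists>a'. allowed m A a a' \<and> \<phi>loc a a' = b) \<longleftrightarrow> (\<exists>b'. allowed n B b' b \<and> \<phi>invloc b' b = a))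
       \<and> ((\<exists>b'. allowed n B b' b \<and> \<phi>invloc b' b = a) \<longleftrightarrow>
            (\<exists>x\<in>shift_space m A. \<exists>y\<in>shift_space n B. x 0 = a \<and> y 0 = b \<and> y = \<phi> x))"
proof -
  have "\<phi> ` shift_space m A = shift_space n B"
    using conjugacy_image[OF elementary_conjugacy_conjugacy[OF assms(5)]] .
  then have iv: "(\<exists>x\<in>shift_space m A. \<exists>y\<in>shift_space n B. x 0 = a \<and> y 0 = b \<and> y = \<phi> x)
      \<longleftrightarrow> (\<exists>x\<in>shift_space m A. x 0 = a \<and> \<phi> x 0 = b)"
    by blast
  show ?thesis
    unfolding iv R_matrix_def
    using local_rule_iff_point[OF assms(5,3)] inverse_local_rule_iff_point[OF assms(5,4)]
    by simp
qed

end
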